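(* Let $\mathcal{V}$ be a finite set of nodes, $\mathcal{F}$ a finite set of flows, each flow $f$ with rate $\lambda_f>0$ and path node set $\mathcal{V}_f\subseteq\mathcal{V}$, each node $v$ with capacity $c_v>0$, and assume $\max_f\lambda_f\le\min_v c_v$. Fix $\mathcal{U}\subseteq\mathcal{V}$ and let $OPT(Q2,\mathcal{U})$ be the optimal value of the relaxed allocation problem Q2 for $\mathcal{U}$ (defined in the context). Let $\pi_{\mathrm{GCA}}^{\mathcal{U}}$ be the total rate of flows fully assigned to nodes of $\mathcal{U}$ by the GCA algorithm (defined in the context). Then $\pi_{\mathrm{GCA}}^{\mathcal{U}}\ge\frac13\,OPT(Q2,\mathcal{U})$.
   Context: Problem Q2 for $\mathcal{U}$: maximize $\sum_{f\in\mathcal{F}}\sum_{v\in\mathcal{V}_f\cap\mathcal{U}}\lambda_f^v$ over nonnegative $(\lambda_f^v)$ subject to $\sum_{f}\lambda_f^v\le c_v$ for $v\in\mathcal{U}$, $\lambda_f^v=0$ for $v\notin\mathcal{U}$, and $\sum_{v\in\mathcal{U}}\lambda_f^v\le\lambda_f$ for all $f$. Write $\mathcal{U}_f=\mathcal{V}_f\cap\mathcal{U}$ and $\mathcal{F}_{\mathcal{U}}=\{f:\mathcal{U}_f\ne\emptyset\}$; $c'_v$ denotes the remaining capacity of node $v$ (initially $c_v$). GCA algorithm: sort $\mathcal{F}_{\mathcal{U}}$ in nonincreasing order of rate. Phase I: for each flow $f$ in this order, if some $v\in\mathcal{U}_f$ has $c'_v\ge\lambda_f$, set $\lambda_f^v=\lambda_f$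 for one such $v$ and decrease $c'_v$ by $\lambda_f$. Phase II: for each flow $f$ not yet assigned, in the sorted order, if $\sum_{v\in\mathcal{U}_f}c'_v\ge\lambda_f$, split $f$ and assign it fully to a subset of the nodes of $\mathcal{U}_f$ using their remaining capacities. *)

theory Defs
  imports Complex_Main
begin

text \<open>Feasible points of problem Q2 for the node set U:
  x f v is the amount of flow f allocated to node v.\<close>
definition q2_feasible ::
  "'f set \<Rightarrow> 'v set \<Rightarrow> ('f \<Rightarrow> real) \<Rightarrow> ('v \<Rightarrow> real) \<Rightarrow> 'v set
     \<Rightarrow> ('f \<Rightarrow> 'v \<Rightarrow> real) \<Rightarrow> bool" where
  "q2_feasible F V lam c U x \<longleftrightarrow>
     (\<forall>f\<in>F. \<forall>v\<in>V. 0 \<le> x f v) \<and>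
     (\<forall>v\<in>U. (\<Sum>f\<in>F. x f v) \<le> c v) \<and>
     (\<forall>f\<in>F. \<forall>v\<in>V - U. x f v = 0) \<and>
     (\<forall>f\<in>F. (\<Sum>v\<in>U. x f v) \<le> lam f)"

definition q2_objective ::
  "'f set \<Rightarrow> ('f \<Rightarrow> 'v set) \<Rightarrow> 'v set \<Rightarrow> ('f \<Rightarrow> 'v \<Rightarrow> real) \<Rightarrow> real" where
  "q2_objective F Vf U x = (\<Sum>f\<in>F. \<Sum>v\<in>Vf f \<inter> U. x f v)"

definition opt_q2 ::
  "'f set \<Rightarrow> 'v set \<Rightarrow> ('f \<Rightarrow> real) \<Rightarrow> ('f \<Rightarrow> 'v set) \<Rightarrow> ('v \<Rightarrow> real) \<Rightarrow> 'v set \<Rightarrow> real" where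
  "opt_q2 F V lam Vf c U =
     Sup (q2_objective F Vf U ` {x. q2_feasible F V lam c U x})"

text \<open>Phase I of GCA, as a (nondeterministic) big-step relation over the sorted
  list of flows: phase1 lam Uf fs c A c' A' means processing fs starting from
  remaining capacities c and assigned set A may end in c', A'.
  Uf f stands for V_f \<inter> U.\<close>
inductive gca_phase1 ::
  "('f \<Rightarrow> real) \<Rightarrow> ('f \<Rightarrow> 'v set) \<Rightarrow> 'f list \<Rightarrow> ('v \<Rightarrow> real) \<Rightarrow> 'f set
     \<Rightarrow> ('v \<Rightarrow> real) \<Rightarrow> 'f set \<Rightarrow> bool"
  for lam :: "'f \<Rightarrow> real" and Uf :: "'f \<Rightarrow> 'v set" where
  p1_nil: "gca_phase1 lam Uf [] c A c A"
| p1_assign: "\<lbrakk> v \<in> Uf f; lam f \<le> c v;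
               gca_phase1 lam Uf fs (c(v := c v - lam f)) (insert f A) c' A' \<rbrakk>
             \<Longrightarrow> gca_phase1 lam Uf (f # fs) c A c' A'"
| p1_skip: "\<lbrakk> \<not> (\<exists>v\<in>Uf f. lam f \<le> c v); gca_phase1 lam Uf fs c A c' A' \<rbrakk>
             \<Longrightarrow> gca_phase1 lam Uf (f # fs) c A c' A'"

inductive gca_phase2 ::
  "('f \<Rightarrow> real) \<Rightarrow> ('f \<Rightarrow> 'v set) \<Rightarrow> 'f list \<Rightarrow> ('v \<Rightarrow> real) \<Rightarrow> 'f set
     \<Rightarrow> ('v \<Rightarrow> real) \<Rightarrow> 'f set \<Rightarrow> bool"
  for lam :: "'f \<Rightarrow> real" and Uf :: "'f \<Rightarrow> 'v set" where
  p2_nil: "gca_phase2 lam Uf [] c A c A"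
| p2_done: "\<lbrakk> f \<in> A; gca_phase2 lam Uf fs c A c' A' \<rbrakk>
             \<Longrightarrow> gca_phase2 lam Uf (f # fs) c A c' A'"
| p2_split: "\<lbrakk> f \<notin> A; lam f \<le> (\<Sum>v\<in>Uf f. c v);
               \<forall>v\<in>Uf f. 0 \<le> d v \<and> d v \<le> c v; (\<Sum>v\<in>Uf f. d v) = lam f;
               gca_phase2 lam Uf fs (\<lambda>v. if v \<in> Uf f then c v - d v else c v)
                 (insert f A) c' A' \<rbrakk>
             \<Longrightarrow> gca_phase2 lam Uf (f # fs) c A c' A'"
| p2_skip: "\<lbrakk> f \<notin> A; \<not> lam f \<le> (\<Sum>v\<in>Uf f. c v); gca_phase2 lam Uf fs c A c' A' \<rbrakk>
             \<Longrightarrow> gca_phase2 lam Uf (f # fs) c A c' A'"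

end

theory Submission
  imports Defs
begin

text \<open>Both phases consume exactly the rate of each flow they assign, so the capacity used
  on U equals the GCA value S. A flow that Phase I leaves unassigned was rejected at every node
  v of U_f; since flows come in nonincreasing order of rate, at that moment v had already lost
  at least lam f to earlier flows while fewer than lam f remained, so more than half of c v is
  used. Hence the nodes touched by unserved flows have total capacity at most 2 S, and any
  feasible point of Q2 earns at most S on served flows and at most that capacity on the
  rest.\<close>

lemma sum_Diff_insert_split:
  assumes "finite (B - A)" "f \<in> B" "f \<notin> A"
  shows "sum g (B - A) = g f + sum g (B - insert f A)"
proof -
  have "B - insert f A = (B - A) - {f}" by auto
  with assms show ?thesis by (simp add: sum.remove)
qed

lemma gca_phase1_assigned_bounds:
  "gca_phase1 lam Uf fs c A c' A' \<Longrightarrow> A \<subseteq> A' \<and> A' \<subseteq> A \<union> set fs"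
  by (induction rule: gca_phase1.induct) auto

lemma gca_phase1_capacity_decreasing:
  "gca_phase1 lam Uf fs c A c' A' \<Longrightarrow> \<forall>g\<in>set fs. 0 \<le> lam g \<Longrightarrow> c' v \<le> c v"
proof (induction arbitrary: v rule: gca_phase1.induct)
  case (p1_assign w f c fs A c' A')
  then have "c' v \<le> (c(w := c w - lam f)) v" by simp
  with p1_assign.prems show ?case by (cases "v = w") auto
qed auto

lemma gca_phase1_capacity_used:
  assumes "gca_phase1 lam Uf fs c A c' A'" "finite W" "\<forall>g\<in>set fs. Uf g \<subseteq> W"
    and "distinct fs" "A \<inter> set fs = {}"
  shows "(\<Sum>v\<in>W. c v - c' v) = (\<Sum>f\<in>A' - A. lam f)"
  using assms
proof (induction rule: gca_phase1.induct)
  case (p1_assign v f c fs A c' A')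
  let ?cv = "c(v := c v - lam f)"
  have "(\<Sum>w\<in>W. c w - ?cv w) = (\<Sum>w\<in>W. if w = v then lam f else 0)"
    by (rule sum.cong) auto
  also have "\<dots> = lam f" using p1_assign by auto
  finally have used_f: "(\<Sum>w\<in>W. c w - ?cv w) = lam f" .
  have "(\<Sum>w\<in>W. c w - c' w) = (\<Sum>w\<in>W. c w - ?cv w) + (\<Sum>w\<in>W. ?cv w - c' w)"
    by (simp add: sum.distrib[symmetric])
  also have "\<dots> = lam f + (\<Sum>g\<in>A' - insert f A. lam g)"
    using used_f p1_assign by auto
  also have "\<dots> = (\<Sum>g\<in>A' - A. lam g)"
    using gca_phase1_assigned_bounds[OF p1_assign(3)] p1_assign.prems
    by (intro sum_Diff_insert_split[symmetric]) (auto intro: rev_finite_subset[of "insert f (set fs)"])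
  finally show ?case .
qed auto

text \<open>Here c0 are the initial capacities. The invariant is that a node already used has lost at
  least the rate of each flow still to come; it is kept because flows arrive in nonincreasing
  order of rate.\<close>

lemma gca_phase1_half_used_invariant:
  assumes "gca_phase1 lam Uf fs c A c' A'" "\<forall>g\<in>set fs. 0 \<le> lam g"
    and "sorted_wrt (\<lambda>f g. lam g \<le> lam f) fs"
    and "\<forall>v. c v \<le> c0 v"
    and "\<forall>v. c v < c0 v \<longrightarrow> (\<forall>g\<in>set fs. lam g \<le> c0 v - c v)"
    and "\<forall>g\<in>set fs. \<forall>v\<in>Uf g. lam g \<le> c0 v"
    and "f \<in> set fs - A'" "v \<in> Uf f"
  shows "c0 v < 2 * (c0 v - c' v)"
  using assms
proof (induction arbitrary: f v rule: gca_phase1.induct)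
  case (p1_assign w f' c fs A c' A')
  let ?cw = "c(w := c w - lam f')"
  have "f \<in> set fs - A'"
    using p1_assign.prems(6) gca_phase1_assigned_bounds[OF p1_assign(3)] by auto
  moreover have "\<forall>u. ?cw u \<le> c0 u"
    using p1_assign.prems(1,3) by (simp, smt (verit))
  moreover have "\<forall>u. ?cw u < c0 u \<longrightarrow> (\<forall>g\<in>set fs. lam g \<le> c0 u - ?cw u)"
  proof (intro allI impI ballI)
    fix u g assume used: "?cw u < c0 u" and "g \<in> set fs"
    show "lam g \<le> c0 u - ?cw u"
    proof (cases "u = w")
      case True
      have "lam g \<le> lam f'" using p1_assign.prems(2) \<open>g \<in> set fs\<close> by simp
      moreover have "c w \<le> c0 w" using p1_assign.prems(3) by blast
      ultimately show ?thesis using True by simp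
    next
      case False
      with used \<open>g \<in> set fs\<close> show ?thesis using p1_assign.prems(4) by auto
    qed
  qed
  ultimately show ?case using p1_assign by auto
next
  case (p1_skip f' c fs A c' A')
  show ?case
  proof (cases "f = f'")
    case True
    have "c v < lam f" "lam f \<le> c0 v"
      using p1_skip.hyps(1) p1_skip.prems(5-7) True by auto
    moreover have "lam f \<le> c0 v - c v"
      using p1_skip.prems(4,6) calculation by auto
    moreover have "c' v \<le> c v"
      using gca_phase1_capacity_decreasing[OF p1_skip(2)] p1_skip.prems(1) by auto
    ultimately show ?thesis by (simp add: algebra_simps)
  next
    case False
    with p1_skip show ?thesis by auto
  qed
qed auto

lemma gca_phase1_unassigned_half_used:
  assumes "gca_phase1 lam Uf fs c A c' A'" "\<forall>g\<in>set fs. 0 \<le> lam g"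
    and "sorted_wrt (\<lambda>f g. lam g \<le> lam f) fs"
    and "\<forall>g\<in>set fs. \<forall>v\<in>Uf g. lam g \<le> c v"
    and "f \<in> set fs - A'" "v \<in> Uf f"
  shows "c v < 2 * (c v - c' v)"
  using gca_phase1_half_used_invariant[of lam Uf fs c A c' A' c] assms by auto

lemma gca_phase2_assigned_bounds:
  "gca_phase2 lam Uf fs c A c' A' \<Longrightarrow> A \<subseteq> A' \<and> A' \<subseteq> A \<union> set fs"
  by (induction rule: gca_phase2.induct) auto

lemma gca_phase2_capacity_decreasing:
  "gca_phase2 lam Uf fs c A c' A' \<Longrightarrow> c' v \<le> c v"
proof (induction arbitrary: v rule: gca_phase2.induct)
  case (p2_split f A c d fs c' A')
  then show ?case using p2_split.IH[of v] by (cases "v \<in> Uf f") force+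
qed auto

lemma gca_phase2_capacity_used:
  assumes "gca_phase2 lam Uf fs c A c' A'" "finite W" "\<forall>g\<in>set fs. Uf g \<subseteq> W"
  shows "(\<Sum>v\<in>W. c v - c' v) = (\<Sum>f\<in>A' - A. lam f)"
  using assms
proof (induction rule: gca_phase2.induct)
  case (p2_done f A fs c c' A')
  then have "insert f A = A" by auto
  with p2_done show ?case by auto
next
  case (p2_split f A c d fs c' A')
  let ?cd = "\<lambda>v. if v \<in> Uf f then c v - d v else c v"
  have "(\<Sum>w\<in>W. c w - ?cd w) = (\<Sum>w\<in>W. if w \<in> Uf f then d w else 0)"
    by (rule sum.cong) auto
  also have "\<dots> = (\<Sum>w\<in>Uf f. d w)"
    using p2_split.prems by (simp add: sum.inter_restrict[symmetric] Int_absorb1)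
  finally have used_f: "(\<Sum>w\<in>W. c w - ?cd w) = lam f" using p2_split.hyps(4) by simp
  have "(\<Sum>w\<in>W. c w - c' w) = (\<Sum>w\<in>W. c w - ?cd w) + (\<Sum>w\<in>W. ?cd w - c' w)"
    by (simp add: sum.distrib[symmetric])
  also have "\<dots> = lam f + (\<Sum>g\<in>A' - insert f A. lam g)"
    using used_f p2_split by auto
  also have "\<dots> = (\<Sum>g\<in>A' - A. lam g)"
    using gca_phase2_assigned_bounds[OF p2_split(5)] p2_split.hyps(1)
    by (intro sum_Diff_insert_split[symmetric]) (auto intro: rev_finite_subset[of "insert f (set fs)"])
  finally show ?case .
qed auto

lemma gca_capacity_used:
  assumes "gca_phase1 lam Uf fs c {} c1 A1" "gca_phase2 lam Uf fs c1 A1 c2 A2"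
    and "finite W" "\<forall>g\<in>set fs. Uf g \<subseteq> W" "distinct fs"
  shows "(\<Sum>v\<in>W. c v - c2 v) = (\<Sum>f\<in>A2. lam f)"
proof -
  have "A1 \<subseteq> A2" "A2 \<subseteq> set fs"
    using gca_phase1_assigned_bounds[OF assms(1)] gca_phase2_assigned_bounds[OF assms(2)]
    by auto
  then have "(\<Sum>f\<in>A2. lam f) = (\<Sum>f\<in>A1. lam f) + (\<Sum>f\<in>A2 - A1. lam f)"
    by (simp add: sum.subset_diff finite_subset)
  also have "\<dots> = (\<Sum>v\<in>W. c v - c1 v) + (\<Sum>v\<in>W. c1 v - c2 v)"
    using gca_phase1_capacity_used[OF assms(1,3,4,5)] gca_phase2_capacity_used[OF assms(2-4)]
    by simp
  also have "\<dots> = (\<Sum>v\<in>W. c v - c2 v)" by (simp add: sum.distrib[symmetric])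
  finally show ?thesis ..
qed

lemma gca_unserved_nodes_capacity:
  assumes "gca_phase1 lam Uf fs c {} c1 A1" "gca_phase2 lam Uf fs c1 A1 c2 A2"
    and "finite W" "\<forall>g\<in>set fs. Uf g \<subseteq> W" "distinct fs"
    and "\<forall>g\<in>set fs. 0 \<le> lam g" "sorted_wrt (\<lambda>f g. lam g \<le> lam f) fs"
    and "\<forall>g\<in>set fs. \<forall>v\<in>Uf g. lam g \<le> c v"
  shows "(\<Sum>v\<in>(\<Union>f\<in>set fs - A2. Uf f). c v) \<le> 2 * (\<Sum>f\<in>A2. lam f)"
proof -
  let ?N = "\<Union>f\<in>set fs - A2. Uf f"
  have NW: "?N \<subseteq> W" using assms(4) by auto
  have half_used: "c v \<le> 2 * (c v - c2 v)" if "v \<in> ?N" for v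
  proof -
    obtain f where "f \<in> set fs - A2" "v \<in> Uf f" using \<open>v \<in> ?N\<close> by auto
    moreover have "A1 \<subseteq> A2" using gca_phase2_assigned_bounds[OF assms(2)] by auto
    ultimately have "c v < 2 * (c v - c1 v)"
      using gca_phase1_unassigned_half_used[OF assms(1,6-8)] by blast
    then show ?thesis using gca_phase2_capacity_decreasing[OF assms(2), of v] by simp
  qed
  have used_nonneg: "0 \<le> c v - c2 v" for v
    using gca_phase1_capacity_decreasing[OF assms(1,6), of v]
      gca_phase2_capacity_decreasing[OF assms(2), of v] by linarith
  have "(\<Sum>v\<in>?N. c v) \<le> (\<Sum>v\<in>?N. 2 * (c v - c2 v))"
    using half_used by (rule sum_mono)
  also have "\<dots> \<le> (\<Sum>v\<in>W. 2 * (c v - c2 v))"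
    using assms(3) NW used_nonneg by (intro sum_mono2) auto
  also have "\<dots> = 2 * (\<Sum>f\<in>A2. lam f)"
    using gca_capacity_used[OF assms(1-5)] by (metis sum_distrib_left)
  finally show ?thesis .
qed

lemma q2_feasible_zero:
  "\<forall>f\<in>F. 0 \<le> lam f \<Longrightarrow> \<forall>v\<in>U. 0 \<le> c v \<Longrightarrow> q2_feasible F V lam c U (\<lambda>f v. 0)"
  unfolding q2_feasible_def by simp

lemma opt_q2_le:
  assumes "q2_feasible F V lam c U x0"
    and "\<And>x. q2_feasible F V lam c U x \<Longrightarrow> q2_objective F Vf U x \<le> B"
  shows "opt_q2 F V lam Vf c U \<le> B"
  unfolding opt_q2_def using assms by (intro cSup_least) auto

lemma q2_objective_le_assigned_plus_capacity:
  assumes "q2_feasible F V lam c U x" "finite F" "finite U" "U \<subseteq> V"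
    and "A \<subseteq> F" "N \<subseteq> U" "\<forall>f\<in>F - A. Vf f \<inter> U \<subseteq> N"
  shows "q2_objective F Vf U x \<le> (\<Sum>f\<in>A. lam f) + (\<Sum>v\<in>N. c v)"
proof -
  have x_nonneg: "\<And>f v. f \<in> F \<Longrightarrow> v \<in> U \<Longrightarrow> 0 \<le> x f v"
    and node_cap: "\<forall>v\<in>U. (\<Sum>f\<in>F. x f v) \<le> c v"
    and flow_cap: "\<forall>f\<in>F. (\<Sum>v\<in>U. x f v) \<le> lam f"
    using assms(1,4) unfolding q2_feasible_def by auto
  have finN: "finite N" using assms(3,6) finite_subset by blast
  have served: "(\<Sum>v\<in>Vf f \<inter> U. x f v) \<le> lam f" if "f \<in> A" for f
  proof -
    have "(\<Sum>v\<in>Vf f \<inter> U. x f v) \<le> (\<Sum>v\<in>U. x f v)"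
      using that assms(3,5) x_nonneg by (intro sum_mono2) auto
    then show ?thesis using flow_cap that assms(5) by fastforce
  qed
  have unserved: "(\<Sum>v\<in>Vf f \<inter> U. x f v) \<le> (\<Sum>v\<in>N. x f v)" if "f \<in> F - A" for f
    using that finN assms(6,7) x_nonneg by (intro sum_mono2) auto
  have "q2_objective F Vf U x
      = (\<Sum>f\<in>A. \<Sum>v\<in>Vf f \<inter> U. x f v) + (\<Sum>f\<in>F - A. \<Sum>v\<in>Vf f \<inter> U. x f v)"
    unfolding q2_objective_def using assms(2,5) by (simp add: sum.subset_diff)
  also have "\<dots> \<le> (\<Sum>f\<in>A. lam f) + (\<Sum>f\<in>F - A. \<Sum>v\<in>N. x f v)"
    using served unserved by (intro add_mono sum_mono) auto
  also have "(\<Sum>f\<in>F - A. \<Sum>v\<in>N. x f v) \<le> (\<Sum>f\<in>F. \<Sum>v\<in>N. x f v)"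
    using assms(2,6) x_nonneg by (intro sum_mono2) (auto intro!: sum_nonneg)
  also have "\<dots> = (\<Sum>v\<in>N. \<Sum>f\<in>F. x f v)" by (rule sum.swap)
  also have "\<dots> \<le> (\<Sum>v\<in>N. c v)" using node_cap assms(6) by (intro sum_mono) auto
  finally show ?thesis by simp
qed

theorem lemma5:
  fixes V :: "'v set" and F :: "'f set"
    and lam :: "'f \<Rightarrow> real" and Vf :: "'f \<Rightarrow> 'v set" and c :: "'v \<Rightarrow> real"
    and U :: "'v set" and fs :: "'f list"
    and c1 c2 :: "'v \<Rightarrow> real" and A1 A2 :: "'f set"
  assumes "finite V" and "finite F"
    and "\<forall>f\<in>F. 0 < lam f"
    and "\<forall>f\<in>F. Vf f \<subseteq> V"
    and "\<forall>v\<in>V. 0 < c v"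
    and "\<forall>f\<in>F. \<forall>v\<in>V. lam f \<le> c v"
    and "U \<subseteq> V"
    and "distinct fs"
    and "set fs = {f\<in>F. Vf f \<inter> U \<noteq> {}}"
    and "sorted_wrt (\<lambda>f g. lam g \<le> lam f) fs"
    and "gca_phase1 lam (\<lambda>f. Vf f \<inter> U) fs c {} c1 A1"
    and "gca_phase2 lam (\<lambda>f. Vf f \<inter> U) fs c1 A1 c2 A2"
  shows "(\<Sum>f\<in>A2. lam f) \<ge> opt_q2 F V lam Vf c U / 3"
proof -
  define N where "N = (\<Union>f\<in>set fs - A2. Vf f \<inter> U)"
  have finU: "finite U" using assms(1,7) finite_subset by blast
  have A2F: "A2 \<subseteq> F"
    using gca_phase1_assigned_bounds[OF assms(11)] gca_phase2_assigned_bounds[OF assms(12)]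
      assms(9) by auto
  have "(\<Sum>v\<in>N. c v) \<le> 2 * (\<Sum>f\<in>A2. lam f)"
    unfolding N_def using assms(3,6,7,9) finU
    by (intro gca_unserved_nodes_capacity[OF assms(11,12) _ _ assms(8) _ assms(10)])
      (auto intro: less_imp_le)
  moreover have "opt_q2 F V lam Vf c U \<le> (\<Sum>f\<in>A2. lam f) + (\<Sum>v\<in>N. c v)"
  proof (rule opt_q2_le)
    show "q2_feasible F V lam c U (\<lambda>f v. 0)"
      using assms(3,5,7) by (intro q2_feasible_zero) (auto intro: less_imp_le)
    have "\<forall>f\<in>F - A2. Vf f \<inter> U \<subseteq> N" using assms(9) unfolding N_def by auto
    then show "q2_objective F Vf U x \<le> (\<Sum>f\<in>A2. lam f) + (\<Sum>v\<in>N. c v)"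
      if "q2_feasible F V lam c U x" for x
      using that assms(2,7) finU A2F unfolding N_def
      by (intro q2_objective_le_assigned_plus_capacity) auto
  qed
  ultimately show ?thesis by linarith
qed

end
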